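(* Let $(\mathcal{A},\mu,\alpha)$ be a Hom-Malcev-admissible superalgebra. Then for each $n\geq 0$ the $n$th derived Hom-superalgebra $\mathcal{A}^{n}=(\mathcal{A},\mu^{(n)}=\alpha^{2^{n}-1}\circ\mu,\alpha^{2^{n}})$ is also a Hom-Malcev-admissible superalgebra.
   Context: $\mathcal{A}=\mathcal{A}_0\oplus\mathcal{A}_1$ is a $\mathbb{Z}_2$-graded vector space over an algebraically closed field $\mathbb{K}$ of characteristic $0$; $|x|$ is the parity of homogeneous $x$; even maps preserve parity. A Hom-superalgebra is a triple $(\mathcal{A},\mu,\alpha)$ with $\mu$ even bilinear, $\alpha$ even linear and $\alpha\circ\mu=\mu\circ(\alpha\otimes\alpha)$. Its super-commutator Hom-superalgebra is $\mathcal{A}^-=(\mathcal{A},[-,-],\alpha)$ with $[x,y]=\mu(x,y)-(-1)^{|x||y|}\mu(y,x)$. For a bracket, $\widetilde{J}(x,y,z)=[[x,y],\alpha(z)]-[\alpha(x),[y,z]]-(-1)^{|y||z|}[[x,z],\alpha(y)]$. A Hom-Malcev superalgebra is a Hom-superalgebra $(\mathcal{A},[-,-],\alpha)$ with $[x,y]=-(-1)^{|x||y|}[y,x]$ and, for all homogeneous $x,y,z,t$, $2[\alpha^{2}(t),\widetilde{J}(x,y,z)]=\widetilde{J}(\alpha(t),\alpha(x),[y,z])+(-1)^{|x|(|y|+|z|)}\widetilde{J}(\alpha(t),\alpha(y),[z,x])+(-1)^{|z|(|x|+|y|)}\widetilde{J}(\alpha(t),\alpha(z),[x,y])$. A Hom-superalgebra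 is Hom-Malcev-admissible if $\mathcal{A}^-$ is a Hom-Malcev superalgebra. *)

theory Defs
  imports Main "HOL-Computational_Algebra.Polynomial"
begin

text \<open>The ground field: algebraically closed (every nonconstant polynomial has a root);
  characteristic 0 is imposed via the type class field_char_0.\<close>
definition alg_closed_field :: "'k::field itself \<Rightarrow> bool" where
  "alg_closed_field _ \<longleftrightarrow> (\<forall>p::'k poly. degree p > 0 \<longrightarrow> (\<exists>x. poly p x = 0))"

definition graded_vs :: "('k::field \<Rightarrow> 'v::ab_group_add \<Rightarrow> 'v) \<Rightarrow> 'v set \<Rightarrow> 'v set \<Rightarrow> bool" where
  "graded_vs sc A0 A1 \<longleftrightarrow> vector_space sc \<and> module.subspace sc A0 \<and> module.subspace sc A1 \<and>
     (\<forall>v. \<exists>!ab. fst ab \<in> A0 \<and> snd ab \<in> A1 \<and> v = fst ab + snd ab)"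

definition hc :: "'v set \<Rightarrow> 'v set \<Rightarrow> nat \<Rightarrow> 'v set" where
  "hc A0 A1 p = (if p mod 2 = 0 then A0 else A1)"

definition sgn_sc :: "('k::field \<Rightarrow> 'v \<Rightarrow> 'v) \<Rightarrow> nat \<Rightarrow> 'v \<Rightarrow> 'v" where
  "sgn_sc sc n v = sc ((-1) ^ n) v"

definition even_map :: "'v set \<Rightarrow> 'v set \<Rightarrow> ('v \<Rightarrow> 'v) \<Rightarrow> bool" where
  "even_map A0 A1 f \<longleftrightarrow> (\<forall>p\<in>{0,1}. \<forall>x\<in>hc A0 A1 p. f x \<in> hc A0 A1 p)"

definition even_bilinear ::
  "('k::field \<Rightarrow> 'v::ab_group_add \<Rightarrow> 'v) \<Rightarrow> 'v set \<Rightarrow> 'v set \<Rightarrow> ('v \<Rightarrow> 'v \<Rightarrow> 'v) \<Rightarrow> bool" where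
  "even_bilinear sc A0 A1 m \<longleftrightarrow>
     (\<forall>x. Vector_Spaces.linear sc sc (m x)) \<and> (\<forall>y. Vector_Spaces.linear sc sc (\<lambda>x. m x y)) \<and>
     (\<forall>p\<in>{0,1}. \<forall>q\<in>{0,1}. \<forall>x\<in>hc A0 A1 p. \<forall>y\<in>hc A0 A1 q. m x y \<in> hc A0 A1 (p + q))"

definition hom_superalgebra ::
  "('k::field \<Rightarrow> 'v::ab_group_add \<Rightarrow> 'v) \<Rightarrow> 'v set \<Rightarrow> 'v set \<Rightarrow> ('v \<Rightarrow> 'v \<Rightarrow> 'v) \<Rightarrow> ('v \<Rightarrow> 'v) \<Rightarrow> bool" where
  "hom_superalgebra sc A0 A1 m a \<longleftrightarrow>
     even_bilinear sc A0 A1 m \<and> Vector_Spaces.linear sc sc a \<and> even_map A0 A1 a \<and>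
     (\<forall>x y. a (m x y) = m (a x) (a y))"

definition super_comm ::
  "('k::field \<Rightarrow> 'v::ab_group_add \<Rightarrow> 'v) \<Rightarrow> ('v \<Rightarrow> 'v \<Rightarrow> 'v) \<Rightarrow> nat \<Rightarrow> nat \<Rightarrow> 'v \<Rightarrow> 'v \<Rightarrow> 'v" where
  "super_comm sc m p q x y = m x y - sgn_sc sc (p * q) (m y x)"

text \<open>J~(x,y,z) = [[x,y],a z] - [a x,[y,z]] - (-1)^(|y||z|) [[x,z],a y]; py, pz parities of y, z.\<close>
definition Jt ::
  "('k::field \<Rightarrow> 'v::ab_group_add \<Rightarrow> 'v) \<Rightarrow> ('v \<Rightarrow> 'v \<Rightarrow> 'v) \<Rightarrow> ('v \<Rightarrow> 'v) \<Rightarrow> nat \<Rightarrow> nat \<Rightarrow> 'v \<Rightarrow> 'v \<Rightarrow> 'v \<Rightarrow> 'v" where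
  "Jt sc b a py pz x y z = b (b x y) (a z) - b (a x) (b y z) - sgn_sc sc (py * pz) (b (b x z) (a y))"

definition hom_malcev_superalgebra ::
  "('k::field \<Rightarrow> 'v::ab_group_add \<Rightarrow> 'v) \<Rightarrow> 'v set \<Rightarrow> 'v set \<Rightarrow> ('v \<Rightarrow> 'v \<Rightarrow> 'v) \<Rightarrow> ('v \<Rightarrow> 'v) \<Rightarrow> bool" where
  "hom_malcev_superalgebra sc A0 A1 b a \<longleftrightarrow>
     hom_superalgebra sc A0 A1 b a \<and>
     (\<forall>p\<in>{0,1}. \<forall>q\<in>{0,1}. \<forall>x\<in>hc A0 A1 p. \<forall>y\<in>hc A0 A1 q.
         b x y = - sgn_sc sc (p * q) (b y x)) \<and>
     (\<forall>px\<in>{0,1}. \<forall>py\<in>{0,1}. \<forall>pz\<in>{0,1}. \<forall>pt\<in>{0,1}.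
       \<forall>x\<in>hc A0 A1 px. \<forall>y\<in>hc A0 A1 py. \<forall>z\<in>hc A0 A1 pz. \<forall>t\<in>hc A0 A1 pt.
         sc 2 (b (a (a t)) (Jt sc b a py pz x y z)) =
           Jt sc b a px (py + pz) (a t) (a x) (b y z)
         + sgn_sc sc (px * (py + pz)) (Jt sc b a py (pz + px) (a t) (a y) (b z x))
         + sgn_sc sc (pz * (px + py)) (Jt sc b a pz (px + py) (a t) (a z) (b x y)))"

definition comp :: "'v::ab_group_add set \<Rightarrow> 'v set \<Rightarrow> nat \<Rightarrow> 'v \<Rightarrow> 'v" where
  "comp A0 A1 p v = (let ab = (THE ab. fst ab \<in> A0 \<and> snd ab \<in> A1 \<and> v = fst ab + snd ab)
                      in if p mod 2 = 0 then fst ab else snd ab)"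

text \<open>The super-commutator bracket of A^-, extended bilinearly from homogeneous elements.\<close>
definition super_bracket ::
  "('k::field \<Rightarrow> 'v::ab_group_add \<Rightarrow> 'v) \<Rightarrow> 'v set \<Rightarrow> 'v set \<Rightarrow> ('v \<Rightarrow> 'v \<Rightarrow> 'v) \<Rightarrow> 'v \<Rightarrow> 'v \<Rightarrow> 'v" where
  "super_bracket sc A0 A1 m x y =
     (\<Sum>p\<in>{0,1::nat}. \<Sum>q\<in>{0,1::nat}. super_comm sc m p q (comp A0 A1 p x) (comp A0 A1 q y))"

definition hom_malcev_admissible ::
  "('k::field \<Rightarrow> 'v::ab_group_add \<Rightarrow> 'v) \<Rightarrow> 'v set \<Rightarrow> 'v set \<Rightarrow> ('v \<Rightarrow> 'v \<Rightarrow> 'v) \<Rightarrow> ('v \<Rightarrow> 'v) \<Rightarrow> bool" where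
  "hom_malcev_admissible sc A0 A1 m a \<longleftrightarrow>
     hom_superalgebra sc A0 A1 m a \<and>
     hom_malcev_superalgebra sc A0 A1 (super_bracket sc A0 A1 m) a"

end

theory Submission
  imports Defs
begin

text \<open>Write \<open>k = 2^n - 1\<close>, so that the \<open>n\<close>th derived Hom-superalgebra is the twist
  \<open>(\<alpha>\<^sup>k \<circ> \<mu>, \<alpha>\<^sup>k\<^sup>+\<^sup>1)\<close>; the statement holds for every \<open>k\<close>. Since \<open>\<alpha>\<^sup>k\<close> is linear, the
  super-commutator of the twisted product is \<open>\<alpha>\<^sup>k\<close> applied to the super-commutator of \<open>\<mu>\<close>.
  Since \<open>\<alpha>\<close> is multiplicative, every \<open>J~\<close> of the twisted bracket is \<open>\<alpha>\<^sup>2\<^sup>k\<close> applied to the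
  corresponding \<open>J~\<close> of the original bracket, and both sides of the Hom-Malcev identity of the
  twist are \<open>\<alpha>\<^sup>3\<^sup>k\<close> applied to the two sides of the original identity.\<close>

lemma linear_endo_simps:
  assumes "Vector_Spaces.linear s s f"
  shows linear_endo_add: "f (x + y) = f x + f y"
    and linear_endo_diff: "f (x - y) = f x - f y"
    and linear_endo_neg: "f (- x) = - f x"
    and linear_endo_sgn_sc: "f (sgn_sc s n x) = sgn_sc s n (f x)"
  using assms module_hom.add module_hom.diff module_hom.neg module_hom.scale
  by (fastforce simp: linear_iff_module_hom sgn_sc_def)+

lemma linear_funpow:
  assumes "Vector_Spaces.linear s s f"
  shows "Vector_Spaces.linear s s (f ^^ j)"
proof (induction j)
  case 0
  have "vector_space s" using assms by (simp add: Vector_Spaces.linear_iff)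
  then show ?case by (simp add: vector_space.linear_ident)
next
  case (Suc j)
  then show ?case using Vector_Spaces.linear_compose[OF Suc assms] by (simp add: o_def)
qed

lemma even_map_funpow: "even_map A0 A1 f \<Longrightarrow> even_map A0 A1 (f ^^ j)"
  unfolding even_map_def by (induction j) auto

lemma funpow_multiplicative:
  "(\<And>x y. f (m x y) = m (f x) (f y)) \<Longrightarrow> (f ^^ j) (m x y) = m ((f ^^ j) x) ((f ^^ j) y)"
  by (induction j) auto

lemma even_bilinear_comp_linear:
  assumes "even_bilinear s A0 A1 m" and "Vector_Spaces.linear s s f" and "even_map A0 A1 f"
  shows "even_bilinear s A0 A1 (\<lambda>x y. f (m x y))"
  unfolding even_bilinear_def
proof (intro conjI allI ballI)
  fix x
  show "Vector_Spaces.linear s s (\<lambda>y. f (m x y))"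
    using Vector_Spaces.linear_compose[of s s "m x" s f] assms(1,2)
    by (simp add: even_bilinear_def o_def)
next
  fix y
  show "Vector_Spaces.linear s s (\<lambda>x. f (m x y))"
    using Vector_Spaces.linear_compose[of s s "\<lambda>x. m x y" s f] assms(1,2)
    by (simp add: even_bilinear_def o_def)
next
  fix p q x y assume "p \<in> {0,1::nat}" "q \<in> {0,1::nat}" "x \<in> hc A0 A1 p" "y \<in> hc A0 A1 q"
  then have "m x y \<in> hc A0 A1 (p + q)" using assms(1) by (auto simp: even_bilinear_def)
  then show "f (m x y) \<in> hc A0 A1 (p + q)"
    using assms(3) by (cases "(p + q) mod 2 = 0") (auto simp: even_map_def hc_def)
qed

lemma hom_superalgebra_twist:
  assumes "hom_superalgebra s A0 A1 m a"
  shows "hom_superalgebra s A0 A1 (\<lambda>x y. (a ^^ k) (m x y)) (a ^^ (k + 1))"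
proof -
  have lin: "Vector_Spaces.linear s s a" and ev: "even_map A0 A1 a"
    and mult: "\<And>x y. a (m x y) = m (a x) (a y)" and bil: "even_bilinear s A0 A1 m"
    using assms by (auto simp: hom_superalgebra_def)
  have "(a ^^ (k + 1)) ((a ^^ k) (m x y)) = (a ^^ k) (m ((a ^^ (k + 1)) x) ((a ^^ (k + 1)) y))"
    for x y
    by (simp only: funpow_multiplicative[of a m, OF mult] flip: funpow_swap1) (simp add: funpow_swap1)
  then show ?thesis
    unfolding hom_superalgebra_def
    using even_bilinear_comp_linear[OF bil linear_funpow[OF lin] even_map_funpow[OF ev]]
      linear_funpow[OF lin, of "k + 1"] even_map_funpow[OF ev, of "k + 1"]
    by blast
qed

lemma super_bracket_comp_linear:
  assumes "Vector_Spaces.linear s s f"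
  shows "super_bracket s A0 A1 (\<lambda>x y. f (m x y)) x y = f (super_bracket s A0 A1 m x y)"
  by (simp add: super_bracket_def super_comm_def linear_endo_simps[OF assms])

lemma Jt_hom:
  assumes "Vector_Spaces.linear s s f" and "\<And>x y. f (b x y) = b (f x) (f y)"
    and "\<And>x. f (a x) = a (f x)"
  shows "f (Jt s b a py pz x y z) = Jt s b a py pz (f x) (f y) (f z)"
  by (simp add: Jt_def linear_endo_simps[OF assms(1)] assms(2,3))

lemma Jt_twist:
  assumes "Vector_Spaces.linear s s a" and "\<And>x y. a (b x y) = b (a x) (a y)"
  shows "Jt s (\<lambda>x y. (a ^^ k) (b x y)) (a ^^ (k + 1)) py pz x y z
           = (a ^^ (k + k)) (Jt s b a py pz x y z)"
proof -
  have mult: "(a ^^ j) (b x y) = b ((a ^^ j) x) ((a ^^ j) y)" for j x y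
    by (rule funpow_multiplicative[of a b, OF assms(2)])
  have shift: "(a ^^ (k + 1)) x = (a ^^ k) (a x)" for x
    by (simp add: funpow_swap1)
  have twice: "(a ^^ k) ((a ^^ k) x) = (a ^^ (k + k)) x" for x
    by (simp add: funpow_add)
  have "(a ^^ (k + k)) (Jt s b a py pz x y z)
          = Jt s b a py pz ((a ^^ (k + k)) x) ((a ^^ (k + k)) y) ((a ^^ (k + k)) z)"
    by (intro Jt_hom linear_funpow assms mult) (simp add: funpow_swap1)
  then show ?thesis
    by (simp only: Jt_def shift mult twice funpow_swap1)
qed

lemma hom_malcev_superalgebra_twist:
  assumes "hom_malcev_superalgebra s A0 A1 b a"
  shows "hom_malcev_superalgebra s A0 A1 (\<lambda>x y. (a ^^ k) (b x y)) (a ^^ (k + 1))"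
proof -
  have hom: "hom_superalgebra s A0 A1 b a"
    and skew: "\<And>p q x y. \<lbrakk>p \<in> {0,1}; q \<in> {0,1}; x \<in> hc A0 A1 p; y \<in> hc A0 A1 q\<rbrakk>
                 \<Longrightarrow> b x y = - sgn_sc s (p * q) (b y x)"
    and malcev: "\<And>px py pz pt x y z t. \<lbrakk>px \<in> {0,1}; py \<in> {0,1}; pz \<in> {0,1}; pt \<in> {0,1};
         x \<in> hc A0 A1 px; y \<in> hc A0 A1 py; z \<in> hc A0 A1 pz; t \<in> hc A0 A1 pt\<rbrakk> \<Longrightarrow>
         s 2 (b (a (a t)) (Jt s b a py pz x y z)) =
           Jt s b a px (py + pz) (a t) (a x) (b y z)
         + sgn_sc s (px * (py + pz)) (Jt s b a py (pz + px) (a t) (a y) (b z x))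
         + sgn_sc s (pz * (px + py)) (Jt s b a pz (px + py) (a t) (a z) (b x y))"
    using assms unfolding hom_malcev_superalgebra_def by blast+
  have lin: "Vector_Spaces.linear s s a" and mult: "\<And>x y. a (b x y) = b (a x) (a y)"
    using hom by (auto simp: hom_superalgebra_def)
  note lin_pow = linear_funpow[OF lin]
  have mult_pow: "(a ^^ j) (b x y) = b ((a ^^ j) x) ((a ^^ j) y)" for j x y
    by (rule funpow_multiplicative[of a b, OF mult])
  have scale_pow: "(a ^^ j) (s c x) = s c ((a ^^ j) x)" for j c x
    using lin_pow by (simp add: Vector_Spaces.linear_iff)
  have pow_pow: "(a ^^ i) ((a ^^ j) x) = (a ^^ (i + j)) x" for i j x
    by (simp add: funpow_add)
  have shift: "(a ^^ k) (a x) = (a ^^ (k + 1)) x" for x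
    by (simp add: funpow_swap1)
  have comm_pow: "(a ^^ j) (a x) = a ((a ^^ j) x)" for j x
    by (simp add: funpow_swap1)
  let ?b' = "\<lambda>x y. (a ^^ k) (b x y)" and ?a' = "a ^^ (k + 1)"
  have lhs: "s 2 (?b' (?a' (?a' t)) (Jt s ?b' ?a' py pz x y z))
               = (a ^^ (k + k + k)) (s 2 (b (a (a t)) (Jt s b a py pz x y z)))" for py pz x y z t
  proof -
    have "?a' (?a' t) = (a ^^ (k + k)) (a (a t))"
      by (simp add: funpow_add funpow_swap1)
    then have "s 2 (?b' (?a' (?a' t)) (Jt s ?b' ?a' py pz x y z))
        = s 2 ((a ^^ k) (b ((a ^^ (k + k)) (a (a t))) ((a ^^ (k + k)) (Jt s b a py pz x y z))))"
      by (simp only: Jt_twist[of s a b, OF lin mult])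
    also have "\<dots> = s 2 ((a ^^ k) ((a ^^ (k + k)) (b (a (a t)) (Jt s b a py pz x y z))))"
      by (simp only: mult_pow)
    also have "\<dots> = (a ^^ (k + k + k)) (s 2 (b (a (a t)) (Jt s b a py pz x y z)))"
      by (simp only: pow_pow scale_pow add.assoc)
    finally show ?thesis .
  qed
  have rhs: "Jt s ?b' ?a' pa pb (?a' u) (?a' v) ((a ^^ k) w)
               = (a ^^ (k + k + k)) (Jt s b a pa pb (a u) (a v) w)" for pa pb u v w
  proof -
    have comm: "(a ^^ k) (Jt s b a pa pb (a u) (a v) w)
            = Jt s b a pa pb (?a' u) (?a' v) ((a ^^ k) w)"
      by (metis Jt_hom[of s "a ^^ k" b a, OF lin_pow mult_pow comm_pow] shift)
    then show ?thesis
      by (simp only: Jt_twist[of s a b, OF lin mult] pow_pow add.assoc flip: comm)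
  qed
  show ?thesis
    unfolding hom_malcev_superalgebra_def
  proof (intro conjI ballI)
    show "hom_superalgebra s A0 A1 ?b' ?a'"
      by (rule hom_superalgebra_twist[OF hom])
  next
    fix p q x y assume "p \<in> {0,1::nat}" "q \<in> {0,1::nat}" "x \<in> hc A0 A1 p" "y \<in> hc A0 A1 q"
    then have "b x y = - sgn_sc s (p * q) (b y x)"
      by (rule skew)
    then show "?b' x y = - sgn_sc s (p * q) (?b' y x)"
      by (simp only: linear_endo_simps[OF lin_pow])
  next
    fix px py pz pt x y z t
    assume "px \<in> {0,1::nat}" "py \<in> {0,1::nat}" "pz \<in> {0,1::nat}" "pt \<in> {0,1::nat}"
      and "x \<in> hc A0 A1 px" "y \<in> hc A0 A1 py" "z \<in> hc A0 A1 pz" "t \<in> hc A0 A1 pt"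
    then have "s 2 (b (a (a t)) (Jt s b a py pz x y z)) =
           Jt s b a px (py + pz) (a t) (a x) (b y z)
         + sgn_sc s (px * (py + pz)) (Jt s b a py (pz + px) (a t) (a y) (b z x))
         + sgn_sc s (pz * (px + py)) (Jt s b a pz (px + py) (a t) (a z) (b x y))"
      by (rule malcev)
    then show "s 2 (?b' (?a' (?a' t)) (Jt s ?b' ?a' py pz x y z)) =
           Jt s ?b' ?a' px (py + pz) (?a' t) (?a' x) (?b' y z)
         + sgn_sc s (px * (py + pz)) (Jt s ?b' ?a' py (pz + px) (?a' t) (?a' y) (?b' z x))
         + sgn_sc s (pz * (px + py)) (Jt s ?b' ?a' pz (px + py) (?a' t) (?a' z) (?b' x y))"
      by (simp only: lhs rhs linear_endo_simps[OF lin_pow])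
  qed
qed

lemma hom_malcev_admissible_twist:
  assumes "hom_malcev_admissible s A0 A1 m a"
  shows "hom_malcev_admissible s A0 A1 (\<lambda>x y. (a ^^ k) (m x y)) (a ^^ (k + 1))"
proof -
  have hom: "hom_superalgebra s A0 A1 m a"
    and malcev: "hom_malcev_superalgebra s A0 A1 (super_bracket s A0 A1 m) a"
    using assms by (auto simp: hom_malcev_admissible_def)
  have "Vector_Spaces.linear s s (a ^^ k)"
    using hom by (simp add: hom_superalgebra_def linear_funpow)
  then have "super_bracket s A0 A1 (\<lambda>x y. (a ^^ k) (m x y))
               = (\<lambda>x y. (a ^^ k) (super_bracket s A0 A1 m x y))"
    by (intro ext super_bracket_comp_linear)
  then show ?thesis
    using hom_superalgebra_twist[OF hom] hom_malcev_superalgebra_twist[OF malcev]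
    by (simp add: hom_malcev_admissible_def)
qed

theorem mainTheorem6:
  fixes sc :: "'k::field_char_0 \<Rightarrow> 'v::ab_group_add \<Rightarrow> 'v"
    and A0 A1 :: "'v set"
    and mu :: "'v \<Rightarrow> 'v \<Rightarrow> 'v"
    and alpha :: "'v \<Rightarrow> 'v"
    and n :: nat
  assumes "alg_closed_field TYPE('k)"
    and "graded_vs sc A0 A1"
    and "hom_malcev_admissible sc A0 A1 mu alpha"
  shows "hom_malcev_admissible sc A0 A1
           (\<lambda>x y. (alpha ^^ (2 ^ n - 1)) (mu x y)) (alpha ^^ (2 ^ n))"
proof -
  have "(2::nat) ^ n = (2 ^ n - 1) + 1" by simp
  then show ?thesis
    using hom_malcev_admissible_twist[OF assms(3), of "2 ^ n - 1"] by metis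
qed

end
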